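(* Let $R$ be a $*$-ring. Then the following are equivalent: (1) $R$ is strongly $J$-$*$-clean. (2) $R$ is strongly $J$-clean and strongly $*$-clean. (3) $R$ is abelian and $R$ is $J$-$*$-clean.
   Context: All rings are associative with identity. A $*$-ring is a ring $R$ with an involution $*$, i.e. a map $a\mapsto a^*$ with $(a+b)^*=a^*+b^*$, $(ab)^*=b^*a^*$, $(a^* )^*=a$. $U(R)$ denotes the group of units and $J(R)$ the Jacobson radical of $R$. A projection is an element $e$ with $e^2=e=e^*$. $R$ is strongly $J$-$*$-clean if every $a\in R$ can be written $a=e+u$ with $e$ a projection, $u\in J(R)$ and $ae=ea$. $R$ is strongly $J$-clean if every $a\in R$ can be written $a=e+u$ with $e$ an idempotent, $u\in J(R)$ and $ae=ea$. $R$ is strongly $*$-clean if every $a\in R$ can be written $a=e+u$ with $e$ a projection, $u\in U(R)$ and $eu=ue$. $R$ is $J$-$*$-clean if every element of $R$ is the sum of a projection and an element of $J(R)$ (no commutation required). A ring is abelian if all its idempotents are central. *)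

theory Defs
  imports Main
begin

definition is_involution :: "('a::ring_1 \<Rightarrow> 'a) \<Rightarrow> bool" where
  "is_involution st \<longleftrightarrow>
     (\<forall>a b. st (a + b) = st a + st b) \<and>
     (\<forall>a b. st (a * b) = st b * st a) \<and>
     (\<forall>a. st (st a) = a)"

definition units_of_ring :: "'a::ring_1 set" where
  "units_of_ring = {u. \<exists>v. u * v = 1 \<and> v * u = 1}"

definition left_ideal :: "'a::ring_1 set \<Rightarrow> bool" where
  "left_ideal I \<longleftrightarrow> 0 \<in> I \<and> (\<forall>x\<in>I. \<forall>y\<in>I. x + y \<in> I) \<and>
     (\<forall>x\<in>I. - x \<in> I) \<and> (\<forall>r. \<forall>x\<in>I. r * x \<in> I)"

definition maximal_left_ideal :: "'a::ring_1 set \<Rightarrow> bool" where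
  "maximal_left_ideal M \<longleftrightarrow> left_ideal M \<and> M \<noteq> UNIV \<and>
     (\<forall>I. left_ideal I \<and> M \<subseteq> I \<longrightarrow> I = M \<or> I = UNIV)"

definition jacobson :: "'a::ring_1 set" where
  "jacobson = \<Inter> {M. maximal_left_ideal M}"

definition idempotent :: "'a::ring_1 \<Rightarrow> bool" where
  "idempotent e \<longleftrightarrow> e * e = e"

definition projection :: "('a::ring_1 \<Rightarrow> 'a) \<Rightarrow> 'a \<Rightarrow> bool" where
  "projection st e \<longleftrightarrow> e * e = e \<and> st e = e"

definition strongly_J_star_clean :: "('a::ring_1 \<Rightarrow> 'a) \<Rightarrow> bool" where
  "strongly_J_star_clean st \<longleftrightarrow>
     (\<forall>a. \<exists>e u. a = e + u \<and> projection st e \<and> u \<in> jacobson \<and> a * e = e * a)"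

definition strongly_J_clean :: "'a::ring_1 itself \<Rightarrow> bool" where
  "strongly_J_clean _ \<longleftrightarrow>
     (\<forall>a::'a. \<exists>e u. a = e + u \<and> idempotent e \<and> u \<in> jacobson \<and> a * e = e * a)"

definition strongly_star_clean :: "('a::ring_1 \<Rightarrow> 'a) \<Rightarrow> bool" where
  "strongly_star_clean st \<longleftrightarrow>
     (\<forall>a. \<exists>e u. a = e + u \<and> projection st e \<and> u \<in> units_of_ring \<and> e * u = u * e)"

definition J_star_clean :: "('a::ring_1 \<Rightarrow> 'a) \<Rightarrow> bool" where
  "J_star_clean st \<longleftrightarrow> (\<forall>a. \<exists>e u. a = e + u \<and> projection st e \<and> u \<in> jacobson)"

definition abelian_ring :: "'a::ring_1 itself \<Rightarrow> bool" where
  "abelian_ring _ \<longleftrightarrow> (\<forall>e::'a. idempotent e \<longrightarrow> (\<forall>x. e * x = x * e))"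

end

theory Submission
  imports Defs
begin

text \<open>
  If \<open>a = e + u\<close> with \<open>u\<close> in the Jacobson radical, then \<open>a = (1 - e) + ((2e - 1) + u)\<close>, and
  \<open>(2e - 1) + u\<close> is a unit because \<open>2e - 1\<close> squares to 1.  For the converses, let \<open>g\<close> be an
  idempotent with a commuting decomposition \<open>g = p + u\<close>, \<open>p\<close> a projection.  Then
  \<open>(g - p)\<^sup>3 = g - p\<close>, which forces \<open>g = p\<close> if \<open>u\<close> is in the radical and \<open>g = 1 - p\<close> if \<open>u\<close> is a
  unit; either way every idempotent is a projection.  And when every idempotent is a
  projection, every idempotent \<open>e\<close> is central: \<open>e + e x (1 - e)\<close> is idempotent, and comparing it
  with its adjoint gives \<open>e x (1 - e) = 0\<close>.
\<close>

context
  fixes st :: "'a::ring_1 \<Rightarrow> 'a"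
  assumes inv: "is_involution st"
begin

lemma involution_add: "st (a + b) = st a + st b"
  and involution_mult: "st (a * b) = st b * st a"
  using inv by (auto simp: is_involution_def)

lemma involution_one: "st 1 = 1"
proof -
  have "st 1 = st 1 * st (st 1)" using inv by (simp add: is_involution_def)
  also have "\<dots> = st (st 1 * 1)" by (simp only: involution_mult)
  also have "\<dots> = 1" using inv by (simp add: is_involution_def)
  finally show ?thesis .
qed

lemma involution_diff: "st (a - b) = st a - st b"
proof -
  have "st (a - b) + st b = st a"
    using involution_add[of "a - b" b] by simp
  then show ?thesis by (simp add: eq_diff_eq)
qed

lemma projection_one_minus: "projection st e \<Longrightarrow> projection st (1 - e)"
  by (simp add: projection_def involution_diff involution_one algebra_simps)

end

lemma left_ideal_left_multiples: "left_ideal {r * x | r. True}"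
proof -
  have mem: "y \<in> {r * x | r. True} \<longleftrightarrow> (\<exists>r. y = r * x)" for y by blast
  have "0 = 0 * x" "r * x + s * x = (r + s) * x" "- (r * x) = (- r) * x" "t * (r * x) = (t * r) * x"
    for r s t by (simp_all add: distrib_right mult.assoc)
  then show ?thesis unfolding left_ideal_def mem by blast
qed

lemma left_ideal_Union_chain:
  assumes "C \<noteq> {}" "\<forall>I\<in>C. left_ideal I" "\<forall>I\<in>C. \<forall>K\<in>C. I \<subseteq> K \<or> K \<subseteq> I"
  shows "left_ideal (\<Union>C)"
proof -
  have ideal: "0 \<in> I" "x \<in> I \<Longrightarrow> y \<in> I \<Longrightarrow> x + y \<in> I" "x \<in> I \<Longrightarrow> - x \<in> I"
      "x \<in> I \<Longrightarrow> r * x \<in> I" if "I \<in> C" for I x y r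
    using assms(2) that by (simp_all add: left_ideal_def)
  have "x + y \<in> \<Union>C" if xy: "x \<in> \<Union>C" "y \<in> \<Union>C" for x y
  proof -
    obtain I K where "I \<in> C" "K \<in> C" "x \<in> I" "y \<in> K" using xy by blast
    moreover have "I \<subseteq> K \<or> K \<subseteq> I" using assms(3) \<open>I \<in> C\<close> \<open>K \<in> C\<close> by simp
    ultimately show ?thesis using ideal(2) by blast
  qed
  with assms(1) ideal(1,3,4) show ?thesis unfolding left_ideal_def by blast
qed

lemma left_ideal_eq_UNIV_iff: "left_ideal I \<Longrightarrow> I = UNIV \<longleftrightarrow> 1 \<in> I"
  by (metis UNIV_I UNIV_eq_I left_ideal_def mult.right_neutral)

lemma ex_maximal_left_ideal_superset:
  fixes L :: "'a::ring_1 set"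
  assumes L: "left_ideal L" "1 \<notin> L"
  shows "\<exists>M. maximal_left_ideal M \<and> L \<subseteq> M"
proof -
  define A where "A = {I::'a set. left_ideal I \<and> L \<subseteq> I \<and> 1 \<notin> I}"
  have "\<forall>C\<in>chains A. \<exists>U\<in>A. \<forall>I\<in>C. I \<subseteq> U"
  proof
    fix C assume C: "C \<in> chains A"
    show "\<exists>U\<in>A. \<forall>I\<in>C. I \<subseteq> U"
    proof (cases "C = {}")
      case True
      then show ?thesis using L by (auto simp: A_def)
    next
      case False
      with C have "left_ideal (\<Union>C)"
        by (intro left_ideal_Union_chain) (auto simp: chains_def chain_subset_def A_def)
      with False C have "\<Union>C \<in> A" by (auto simp: chains_def A_def)
      then show ?thesis by blast
    qed
  qed
  then obtain M where M: "M \<in> A" and max: "\<forall>I\<in>A. M \<subseteq> I \<longrightarrow> I = M"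
    using Zorn_Lemma2 by blast
  have "maximal_left_ideal M"
    using M max left_ideal_eq_UNIV_iff unfolding maximal_left_ideal_def A_def by blast
  with M show ?thesis by (auto simp: A_def)
qed

lemma jacobson_mult_left: "x \<in> jacobson \<Longrightarrow> r * x \<in> (jacobson :: 'a::ring_1 set)"
  by (auto simp: jacobson_def maximal_left_ideal_def left_ideal_def)

lemma jacobson_one_minus_left_invertible:
  fixes u :: "'a::ring_1"
  assumes u: "u \<in> jacobson"
  shows "\<exists>v. v * (1 - u) = 1"
proof (rule ccontr)
  assume "\<not> ?thesis"
  then have "1 \<notin> {r * (1 - u) | r. True}" by auto
  then obtain M where M: "maximal_left_ideal M" "{r * (1 - u) | r. True} \<subseteq> M"
    using ex_maximal_left_ideal_superset left_ideal_left_multiples by blast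
  then have "left_ideal M" "1 \<notin> M"
    using left_ideal_eq_UNIV_iff unfolding maximal_left_ideal_def by blast+
  moreover have "1 - u \<in> M" using M(2) by (metis (mono_tags) mem_Collect_eq mult_1 subsetD)
  moreover have "u \<in> M" using u M(1) by (auto simp: jacobson_def)
  ultimately show False unfolding left_ideal_def by (metis diff_add_cancel)
qed

text \<open>The left inverse \<open>v\<close> of \<open>1 - u\<close> is itself of the form \<open>1 - j\<close> with \<open>j = - v u\<close> in the
  radical, so it has a left inverse too, which must be \<open>1 - u\<close>.\<close>
lemma jacobson_one_minus_unit:
  fixes u :: "'a::ring_1"
  assumes u: "u \<in> jacobson"
  shows "1 - u \<in> units_of_ring"
proof -
  obtain v where v: "v * (1 - u) = 1" using jacobson_one_minus_left_invertible[OF u] ..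
  have "v = 1 - (- v) * u" using v by (simp add: algebra_simps)
  moreover have "(- v) * u \<in> jacobson" using u by (rule jacobson_mult_left)
  ultimately obtain w where w: "w * v = 1" using jacobson_one_minus_left_invertible by metis
  have "w = w * v * (1 - u)" using v by (simp add: mult.assoc)
  with w have "w = 1 - u" by simp
  with v w show ?thesis by (auto simp: units_of_ring_def)
qed

lemma unit_add_jacobson:
  fixes x j :: "'a::ring_1"
  assumes x: "x * y = 1" "y * x = 1" and j: "j \<in> jacobson"
  shows "x + j \<in> units_of_ring"
proof -
  have "1 - (- y) * j \<in> units_of_ring" using j by (intro jacobson_one_minus_unit jacobson_mult_left)
  then obtain w where w: "(1 + y * j) * w = 1" "w * (1 + y * j) = 1"
    by (auto simp: units_of_ring_def)
  have xj: "x + j = x * (1 + y * j)" using x by (simp add: distrib_left flip: mult.assoc)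
  have "(x + j) * (w * y) = x * ((1 + y * j) * w) * y" unfolding xj by (simp only: mult.assoc)
  moreover have "(w * y) * (x + j) = w * (y * x) * (1 + y * j)" unfolding xj by (simp only: mult.assoc)
  ultimately show ?thesis using w x by (auto simp: units_of_ring_def)
qed

lemma commuting_idempotents_diff_cube:
  fixes g e :: "'a::ring_1"
  assumes "g * g = g" "e * e = e" "g * e = e * g"
  shows "(g - e) * (g - e) * (g - e) = g - e"
proof -
  have "(g - e) * (g - e) = g + e - (g * e + g * e)" using assms by (simp add: algebra_simps)
  moreover have "g * (g * e) = g * e" "g * e * e = g * e" "e * (g * e) = g * e"
    using assms by (metis mult.assoc)+
  ultimately show ?thesis using assms by (simp add: algebra_simps)
qed

lemma commuting_idempotents_eq_if_diff_jacobson: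
  fixes g e :: "'a::ring_1"
  assumes "g * g = g" "e * e = e" "g * e = e * g" and J: "g - e \<in> jacobson"
  shows "g = e"
proof -
  define u where "u = g - e"
  have cube: "u * u * u = u" unfolding u_def using assms(1-3) by (rule commuting_idempotents_diff_cube)
  obtain v where v: "v * (1 - u * u) = 1"
    using J jacobson_one_minus_left_invertible jacobson_mult_left unfolding u_def by blast
  have "(1 - u * u) * u = 0" using cube by (simp add: algebra_simps mult.assoc)
  then have "v * (1 - u * u) * u = 0" by (simp add: mult.assoc)
  with v have "u = 0" by simp
  then show ?thesis by (simp add: u_def)
qed

lemma strongly_J_star_clean_idempotent_self_adjoint:
  assumes "strongly_J_star_clean st" "g * g = g"
  shows "st g = g"
proof -
  obtain e u where h: "g = e + u" "projection st e" "u \<in> jacobson" "g * e = e * g"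
    using assms(1) unfolding strongly_J_star_clean_def by blast
  then have "g = e"
    using commuting_idempotents_eq_if_diff_jacobson[OF assms(2) _ h(4)] by (auto simp: projection_def)
  with h(2) show ?thesis by (simp add: projection_def)
qed

text \<open>Here \<open>u = g - p\<close> satisfies \<open>u\<^sup>3 = u\<close>, so \<open>u\<^sup>2 = 1\<close> as \<open>u\<close> is a unit; expanding,
  \<open>g + p - 2gp = 1\<close>, and multiplying by \<open>g\<close> gives \<open>gp = 0\<close>, whence \<open>g = 1 - p\<close>.\<close>
lemma strongly_star_clean_idempotent_self_adjoint:
  assumes inv: "is_involution st" and "strongly_star_clean st" and g: "g * g = g"
  shows "st g = g"
proof -
  obtain p u where h: "g = p + u" "projection st p" "u \<in> units_of_ring" "p * u = u * p"
    using assms(2) unfolding strongly_star_clean_def by blast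
  have p: "p * p = p" by (use h(2) in \<open>simp add: projection_def\<close>)
  have gp: "g * p = p * g" using h(1,4) by (simp add: distrib_left distrib_right)
  have u: "u = g - p" using h(1) by simp
  obtain w where w: "w * u = 1" using h(3) by (auto simp: units_of_ring_def)
  have "w * (u * u * u) = w * u"
    using commuting_idempotents_diff_cube[OF g p gp] u by simp
  with w have "u * u = 1" by (simp flip: mult.assoc)
  then have sq: "g + p - (g * p + g * p) = 1" using u g p gp by (simp add: algebra_simps)
  have "g * (g * p) = g * p" using g by (metis mult.assoc)
  then have "g * (g + p - (g * p + g * p)) = g - g * p"
    using g by (simp add: distrib_left right_diff_distrib)
  with sq have "g * p = 0" by simp
  with sq have "g = 1 - p" by (simp add: eq_diff_eq)
  then show ?thesis using projection_one_minus[OF inv h(2)] by (simp add: projection_def)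
qed

lemma idempotent_corner_zero_if_idempotents_self_adjoint:
  fixes st :: "'a::ring_1 \<Rightarrow> 'a" and e x :: 'a
  assumes inv: "is_involution st" and P: "\<And>g. g * g = g \<Longrightarrow> st g = g"
    and e: "e * e = e"
  shows "e * x * (1 - e) = 0"
proof -
  define y where "y = e * x * (1 - e)"
  have ey: "e * y = y" unfolding y_def using e by (metis mult.assoc)
  have ye: "y * e = 0" unfolding y_def using e by (simp add: mult.assoc algebra_simps)
  have "y * y = 0" by (metis ey ye mult.assoc mult_zero_left)
  then have "(e + y) * (e + y) = e + y" using e ey ye by (simp add: distrib_left distrib_right)
  then have "st (e + y) = e + y" by (rule P)
  moreover have "st (e + y) = e + (1 - e) * st x * e"
    unfolding y_def using P[OF e] by (simp add: involution_add[OF inv] involution_mult[OF inv]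
        involution_diff[OF inv] involution_one[OF inv] mult.assoc)
  ultimately have "y = (1 - e) * st x * e" by simp
  moreover have "e * (1 - e) = 0" using e by (simp add: right_diff_distrib)
  ultimately have "e * y = 0" by (metis mult.assoc mult_zero_left)
  with ey show ?thesis by (simp add: y_def)
qed

lemma idempotent_central_if_idempotents_self_adjoint:
  fixes st :: "'a::ring_1 \<Rightarrow> 'a" and e x :: 'a
  assumes inv: "is_involution st" and P: "\<And>g. g * g = g \<Longrightarrow> st g = g"
    and e: "e * e = e"
  shows "e * x = x * e"
proof -
  have e': "(1 - e) * (1 - e) = 1 - e" using e by (simp add: algebra_simps)
  have "e * x * (1 - e) = 0"
    using inv P e by (rule idempotent_corner_zero_if_idempotents_self_adjoint)
  then have "e * x = e * x * e" by (simp add: right_diff_distrib)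
  moreover have "(1 - e) * x * (1 - (1 - e)) = 0"
    using inv P e' by (rule idempotent_corner_zero_if_idempotents_self_adjoint)
  then have "x * e = e * x * e" by (simp add: left_diff_distrib)
  ultimately show ?thesis by simp
qed

lemma strongly_J_star_clean_imp_strongly_star_clean:
  assumes inv: "is_involution st" and S: "strongly_J_star_clean st"
  shows "strongly_star_clean st"
  unfolding strongly_star_clean_def
proof
  fix a
  obtain e u where h: "a = e + u" "projection st e" "u \<in> jacobson" "a * e = e * a"
    using S unfolding strongly_J_star_clean_def by blast
  have e: "e * e = e" using h(2) by (simp add: projection_def)
  have eu: "e * u = u * e" using h e by (simp add: algebra_simps)
  define x where "x = e + e - 1"
  have xx: "x * x = 1" using e by (simp add: x_def algebra_simps)
  have "x + u \<in> units_of_ring" using xx xx h(3) by (rule unit_add_jacobson)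
  moreover have "a = (1 - e) + (x + u)" using h(1) by (simp add: x_def algebra_simps)
  moreover have "(1 - e) * (x + u) = (x + u) * (1 - e)" using eu e by (simp add: x_def algebra_simps)
  ultimately show "\<exists>e u. a = e + u \<and> projection st e \<and> u \<in> units_of_ring \<and> e * u = u * e"
    using projection_one_minus[OF inv h(2)] by blast
qed

lemma strongly_J_clean_imp_strongly_J_star_clean:
  fixes st :: "'a::ring_1 \<Rightarrow> 'a"
  assumes S: "strongly_J_clean TYPE('a)" and P: "\<And>g. g * g = g \<Longrightarrow> st g = g"
  shows "strongly_J_star_clean st"
  unfolding strongly_J_star_clean_def
proof
  fix a :: 'a
  obtain e u where "a = e + u" "idempotent e" "u \<in> jacobson" "a * e = e * a"
    using S unfolding strongly_J_clean_def by blast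
  moreover from \<open>idempotent e\<close> have "projection st e"
    using P by (simp add: idempotent_def projection_def)
  ultimately show "\<exists>e u. a = e + u \<and> projection st e \<and> u \<in> jacobson \<and> a * e = e * a" by blast
qed

lemma abelian_J_star_clean_imp_strongly_J_star_clean:
  fixes st :: "'a::ring_1 \<Rightarrow> 'a"
  assumes A: "abelian_ring TYPE('a)" and S: "J_star_clean st"
  shows "strongly_J_star_clean st"
  unfolding strongly_J_star_clean_def
proof
  fix a :: 'a
  obtain e u where "a = e + u" "projection st e" "u \<in> jacobson"
    using S unfolding J_star_clean_def by blast
  moreover from \<open>projection st e\<close> have "a * e = e * a"
    using A by (simp add: abelian_ring_def idempotent_def projection_def)
  ultimately show "\<exists>e u. a = e + u \<and> projection st e \<and> u \<in> jacobson \<and> a * e = e * a" by blast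
qed

theorem proposition2p1:
  fixes st :: "'a::ring_1 \<Rightarrow> 'a"
  assumes "is_involution st"
  shows "(strongly_J_star_clean st \<longleftrightarrow>
            strongly_J_clean TYPE('a) \<and> strongly_star_clean st) \<and>
         (strongly_J_star_clean st \<longleftrightarrow>
            abelian_ring TYPE('a) \<and> J_star_clean st)"
proof -
  have weaker_notions: "strongly_J_clean TYPE('a) \<and> J_star_clean st" if "strongly_J_star_clean st"
    using that unfolding strongly_J_star_clean_def strongly_J_clean_def J_star_clean_def
      projection_def idempotent_def by blast
  have abelian: "abelian_ring TYPE('a)" if "strongly_J_star_clean st"
    unfolding abelian_ring_def idempotent_def
    using idempotent_central_if_idempotents_self_adjoint[OF assms]
      strongly_J_star_clean_idempotent_self_adjoint[OF that] by blast
  have "strongly_J_star_clean st"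
    if "strongly_J_clean TYPE('a)" "strongly_star_clean st"
    using that(1) strongly_star_clean_idempotent_self_adjoint[OF assms that(2)]
    by (rule strongly_J_clean_imp_strongly_J_star_clean)
  with weaker_notions abelian show ?thesis
    using strongly_J_star_clean_imp_strongly_star_clean[OF assms]
      abelian_J_star_clean_imp_strongly_J_star_clean by blast
qed

end
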